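(* Let $\mathcal{L}$ be any fragment (set of specifications) of quantifier-free non-linear real arithmetic ($\mathsf{NRA}$) for which there is a sound and complete algorithm $\mathcal{A}_{\mathcal{L}}$ for solving $\mathcal{RPS}$, i.e. an algorithm which, for every specification $\varphi(\mathbf{X},\mathbf{Y})\in\mathcal{L}$, outputs a program of the grammar $\mathcal{G}$ that realizes $\varphi$ over the reals. Then $\mathcal{A}_{\mathcal{L}}$ also solves $\mathcal{RPS}_{\mathbb{Q}}$ for the fragment $\mathcal{L}$, i.e. for every $\varphi\in\mathcal{L}$ the program it outputs realizes $\varphi$ over the rationals. Moreover, there exists a fragment of $\mathsf{NRA}$ for which there does not exist any sound and complete algorithm for solving $\mathcal{RPS}$, but for which there is a sound and complete algorithm for solving $\mathcal{RPS}_{\mathbb{Q}}$.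
   Context: A specification is a quantifier-free $\mathsf{NRA}$ formula $\varphi(\mathbf{X},\mathbf{Y})$: a Boolean combination of polynomial inequalities $p\bowtie 0$, $\bowtie\in\{<,>,\le,\ge\}$, where $p$ is a polynomial with rational coefficients over the input variables $\mathbf{X}=(x_1,\dots,x_m)$ and the output variables $\mathbf{Y}=(y_1,\dots,y_n)$. The grammar $\mathcal{G}$ generates imperative programs built from: assignments $v\leftarrow t$ where $t$ is a polynomial term with rational coefficients over program variables; conditionals "if $C$ then $P$ else $P'$"; loops "while $C$ do $P$", where each condition $C$ is a Boolean combination of polynomial inequalities over program variables; sequential composition; and return statements returning either a tuple of variables or the special symbol $\bot$. Input variables $\mathbf{X}$ are never assigned. For a set $D\in\{\mathbb{R},\mathbb{Q}\}$, a program $\mathsf{Prog}(\mathbf{X})$ realizes $\varphi$ over $D$ if for every $\mathbf{A}\in D^{|\mathbf{X}|}$, running $\mathsf{Prog}$ on $\mathbf{A}$ terminates and returns either $\bot$, in which case $\varphi(\mathbf{A},\mathbf{B})$ is false for all $\mathbf{B}\in D^{|\mathbf{Y}|}$, or a tuple $\mathbf{B}\in D^{|\mathbf{Y}|}$ with $\varphi(\mathbf{A},\mathbf{B})$ true. $\mathcal{RPS}$ (resp. $\mathcal{RPS}_{\mathbb{Q}}$) is the problem of producing, from $\varphi$, a program of $\mathcal{G}$ realizing $\varphi$ over $\mathbb{R}$ (resp. over $\mathbb{Q}$). *)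

theory Defs
  imports Complex_Main
begin

datatype 'v pterm =
    PConst rat
  | PVar 'v
  | PAdd "'v pterm" "'v pterm"
  | PMul "'v pterm" "'v pterm"

primrec peval :: "('v \<Rightarrow> real) \<Rightarrow> 'v pterm \<Rightarrow> real" where
  "peval s (PConst c) = of_rat c"
| "peval s (PVar v) = s v"
| "peval s (PAdd p q) = peval s p + peval s q"
| "peval s (PMul p q) = peval s p * peval s q"

datatype rel = Lt | Gt | Le | Ge

primrec relholds :: "rel \<Rightarrow> real \<Rightarrow> bool" where
  "relholds Lt x = (x < 0)"
| "relholds Gt x = (x > 0)"
| "relholds Le x = (x \<le> 0)"
| "relholds Ge x = (x \<ge> 0)"

datatype 'v fm =
    Atom "'v pterm" rel
  | FNot "'v fm"
  | FAnd "'v fm" "'v fm"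
  | FOr "'v fm" "'v fm"

primrec fholds :: "('v \<Rightarrow> real) \<Rightarrow> 'v fm \<Rightarrow> bool" where
  "fholds s (Atom p r) = relholds r (peval s p)"
| "fholds s (FNot f) = (\<not> fholds s f)"
| "fholds s (FAnd f g) = (fholds s f \<and> fholds s g)"
| "fholds s (FOr f g) = (fholds s f \<or> fholds s g)"

primrec pvars :: "'v pterm \<Rightarrow> 'v set" where
  "pvars (PConst c) = {}"
| "pvars (PVar v) = {v}"
| "pvars (PAdd p q) = pvars p \<union> pvars q"
| "pvars (PMul p q) = pvars p \<union> pvars q"

primrec fvars :: "'v fm \<Rightarrow> 'v set" where
  "fvars (Atom p r) = pvars p"
| "fvars (FNot f) = fvars f"
| "fvars (FAnd f g) = fvars f \<union> fvars g"
| "fvars (FOr f g) = fvars f \<union> fvars g"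

datatype svar = XV nat | YV nat

datatype spec = Spec nat nat "svar fm"

fun spec_wf :: "spec \<Rightarrow> bool" where
  "spec_wf (Spec m n f) =
     (\<forall>v \<in> fvars f. (\<forall>i. v = XV i \<longrightarrow> i < m) \<and> (\<forall>j. v = YV j \<longrightarrow> j < n))"

definition lookup :: "real list \<Rightarrow> nat \<Rightarrow> real" where
  "lookup xs i = (if i < length xs then xs ! i else 0)"

fun senv :: "real list \<Rightarrow> real list \<Rightarrow> svar \<Rightarrow> real" where
  "senv A B (XV i) = lookup A i"
| "senv A B (YV j) = lookup B j"

fun spec_holds :: "spec \<Rightarrow> real list \<Rightarrow> real list \<Rightarrow> bool" where
  "spec_holds (Spec m n f) A B = fholds (senv A B) f"

fun spec_nin :: "spec \<Rightarrow> nat" where "spec_nin (Spec m n f) = m"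
fun spec_nout :: "spec \<Rightarrow> nat" where "spec_nout (Spec m n f) = n"

datatype pvar = PIn nat | PAux nat

datatype prog =
    Assign nat "pvar pterm"          \<comment> \<open>assigns to auxiliary variable PAux v only\<close>
  | If "pvar fm" prog prog
  | While "pvar fm" prog
  | Seq prog prog
  | Return "pvar list"
  | ReturnBot

type_synonym state = "pvar \<Rightarrow> real"

datatype outcome = Cont state | Ret "real list option"

inductive exec :: "prog \<Rightarrow> state \<Rightarrow> outcome \<Rightarrow> bool" where
  Assign: "exec (Assign v t) s (Cont (s(PAux v := peval s t)))"
| IfT: "fholds s c \<Longrightarrow> exec p s out \<Longrightarrow> exec (If c p q) s out"
| IfF: "\<not> fholds s c \<Longrightarrow> exec q s out \<Longrightarrow> exec (If c p q) s out"
| WhileF: "\<not> fholds s c \<Longrightarrow> exec (While c p) s (Cont s)"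
| WhileT: "fholds s c \<Longrightarrow> exec p s (Cont s') \<Longrightarrow> exec (While c p) s' out
            \<Longrightarrow> exec (While c p) s out"
| WhileR: "fholds s c \<Longrightarrow> exec p s (Ret r) \<Longrightarrow> exec (While c p) s (Ret r)"
| SeqC: "exec p s (Cont s') \<Longrightarrow> exec q s' out \<Longrightarrow> exec (Seq p q) s out"
| SeqR: "exec p s (Ret r) \<Longrightarrow> exec (Seq p q) s (Ret r)"
| Return: "exec (Return vs) s (Ret (Some (map s vs)))"
| RetBot: "exec ReturnBot s (Ret None)"

fun init_state :: "real list \<Rightarrow> state" where
  "init_state A (PIn i) = lookup A i"
| "init_state A (PAux j) = 0"

definition realizes :: "real set \<Rightarrow> prog \<Rightarrow> spec \<Rightarrow> bool" where
  "realizes D P \<phi> \<longleftrightarrow>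
     (\<forall>A. length A = spec_nin \<phi> \<and> set A \<subseteq> D \<longrightarrow>
        (\<exists>r. exec P (init_state A) (Ret r) \<and>
           (r = None \<longrightarrow>
              (\<forall>B. length B = spec_nout \<phi> \<and> set B \<subseteq> D \<longrightarrow> \<not> spec_holds \<phi> A B)) \<and>
           (\<forall>B. r = Some B \<longrightarrow>
              length B = spec_nout \<phi> \<and> set B \<subseteq> D \<and> spec_holds \<phi> A B)))"

text \<open>An algorithm (a map from specifications to programs) is sound and complete
  for RPS over D on the fragment L if it outputs a realizing program for every
  specification of L.\<close>
definition solves :: "real set \<Rightarrow> (spec \<Rightarrow> prog) \<Rightarrow> spec set \<Rightarrow> bool" where
  "solves D Alg L \<longleftrightarrow> (\<forall>\<phi> \<in> L. realizes D (Alg \<phi>) \<phi>)"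

definition fragment :: "spec set \<Rightarrow> bool" where
  "fragment L \<longleftrightarrow> (\<forall>\<phi> \<in> L. spec_wf \<phi>)"

end

theory Submission
  imports Defs "HOL-Computational_Algebra.Polynomial"
begin

text \<open>Programs of the grammar only add and multiply rational constants and their inputs, so
  on rational inputs every value they compute, and in particular every tuple they return,
  is rational. Hence a program realizing a specification over \<open>\<real>\<close> also realizes it
  over \<open>\<rat>\<close>: a returned tuple is a rational witness, and \<open>\<bottom>\<close> excludes all real witnesses,
  a fortiori the rational ones. Conversely, the specification \<open>y\<^sup>2 = 2\<close> without inputs is
  realized over \<open>\<rat>\<close> by returning \<open>\<bottom>\<close>, but not by any program over \<open>\<real>\<close>: \<open>\<bottom>\<close> is wrong
  because of \<open>\<surd>2\<close>, and every returned tuple is rational.\<close>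

lemma sqrt_2_not_rat: "sqrt 2 \<notin> \<rat>"
proof
  assume "sqrt 2 \<in> \<rat>"
  moreover have "algebraic_int (sqrt 2)"
    by (intro algebraic_int_sqrt int_imp_algebraic_int) simp
  ultimately have "sqrt 2 \<in> \<int>"
    by (rule rational_algebraic_int_is_int[rotated])
  then obtain k where k: "sqrt 2 = of_int k"
    by (rule Ints_cases)
  have "1 < sqrt 2" "sqrt 2 < 2"
    by (simp_all add: real_less_rsqrt real_less_lsqrt)
  with k have "1 < k" "k < 2"
    by simp_all
  then show False
    by simp
qed

lemma Rats_square_neq_2: "x \<in> \<rat> \<Longrightarrow> x * x \<noteq> (2::real)"
  using sqrt_2_not_rat by (metis Rats_abs_iff power2_eq_square real_sqrt_abs)

lemma peval_Rats: "range s \<subseteq> \<rat> \<Longrightarrow> peval s t \<in> \<rat>"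
  by (induction t) auto

definition outcome_Rats :: "outcome \<Rightarrow> bool" where
  "outcome_Rats out \<longleftrightarrow>
     (case out of Cont s \<Rightarrow> range s \<subseteq> \<rat> | Ret r \<Rightarrow> (\<forall>B. r = Some B \<longrightarrow> set B \<subseteq> \<rat>))"

lemma exec_outcome_Rats: "exec P s out \<Longrightarrow> range s \<subseteq> \<rat> \<Longrightarrow> outcome_Rats out"
  by (induction rule: exec.induct) (auto simp: outcome_Rats_def peval_Rats)

lemma init_state_Rats: "set A \<subseteq> \<rat> \<Longrightarrow> range (init_state A) \<subseteq> \<rat>"
proof safe
  fix v assume "set A \<subseteq> \<rat>"
  then show "init_state A v \<in> \<rat>"
    by (cases v) (auto simp: lookup_def)
qed

lemma exec_Ret_Some_Rats:
  assumes "exec P (init_state A) (Ret (Some B))" and "set A \<subseteq> \<rat>"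
  shows "set B \<subseteq> \<rat>"
  using exec_outcome_Rats[OF assms(1) init_state_Rats[OF assms(2)]]
  by (simp add: outcome_Rats_def)

lemma realizes_UNIV_imp_realizes_Rats:
  assumes "realizes UNIV P \<phi>"
  shows "realizes \<rat> P \<phi>"
  unfolding realizes_def
proof (intro allI impI)
  fix A :: "real list" assume A: "length A = spec_nin \<phi> \<and> set A \<subseteq> \<rat>"
  with assms obtain r where exec: "exec P (init_state A) (Ret r)"
    and none: "r = None \<longrightarrow> (\<forall>B. length B = spec_nout \<phi> \<longrightarrow> \<not> spec_holds \<phi> A B)"
    and some: "\<forall>B. r = Some B \<longrightarrow> length B = spec_nout \<phi> \<and> spec_holds \<phi> A B"
    unfolding realizes_def by auto
  have "\<forall>B. r = Some B \<longrightarrow> set B \<subseteq> \<rat>"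
    using exec A exec_Ret_Some_Rats by blast
  with exec none some show "\<exists>r. exec P (init_state A) (Ret r) \<and>
      (r = None \<longrightarrow> (\<forall>B. length B = spec_nout \<phi> \<and> set B \<subseteq> \<rat> \<longrightarrow> \<not> spec_holds \<phi> A B)) \<and>
      (\<forall>B. r = Some B \<longrightarrow> length B = spec_nout \<phi> \<and> set B \<subseteq> \<rat> \<and> spec_holds \<phi> A B)"
    by blast
qed

lemma not_realizes_UNIV_if_only_irrational_solutions:
  assumes "length A = spec_nin \<phi>" "set A \<subseteq> \<rat>"
    and "length B = spec_nout \<phi>" "spec_holds \<phi> A B"
    and "\<And>B. set B \<subseteq> \<rat> \<Longrightarrow> \<not> spec_holds \<phi> A B"
  shows "\<not> realizes UNIV P \<phi>"
proof
  assume "realizes UNIV P \<phi>"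
  with assms(1) obtain r where exec: "exec P (init_state A) (Ret r)"
    and none: "r = None \<longrightarrow> (\<forall>B. length B = spec_nout \<phi> \<longrightarrow> \<not> spec_holds \<phi> A B)"
    and some: "\<forall>B. r = Some B \<longrightarrow> spec_holds \<phi> A B"
    unfolding realizes_def by auto
  show False
  proof (cases r)
    case None
    with none assms(3,4) show False by blast
  next
    case (Some B')
    with exec assms(2) have "set B' \<subseteq> \<rat>" by (simp add: exec_Ret_Some_Rats)
    with Some some assms(5) show False by blast
  qed
qed

lemma realizes_ReturnBot:
  assumes "\<And>A B. length A = spec_nin \<phi> \<Longrightarrow> set A \<subseteq> D \<Longrightarrow>
             length B = spec_nout \<phi> \<Longrightarrow> set B \<subseteq> D \<Longrightarrow> \<not> spec_holds \<phi> A B"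
  shows "realizes D ReturnBot \<phi>"
  using assms by (auto simp: realizes_def intro: exec.RetBot)

definition sqrt_2_spec :: spec where
  "sqrt_2_spec =
     (let t = PAdd (PMul (PVar (YV 0)) (PVar (YV 0))) (PConst (-2))
      in Spec 0 1 (FAnd (Atom t Le) (Atom t Ge)))"

lemma spec_wf_sqrt_2_spec: "spec_wf sqrt_2_spec"
  by (simp add: sqrt_2_spec_def Let_def)

lemma spec_holds_sqrt_2_spec: "spec_holds sqrt_2_spec A B \<longleftrightarrow> lookup B 0 * lookup B 0 = 2"
  by (auto simp: sqrt_2_spec_def Let_def)

lemma sqrt_2_spec_no_Rats_solution:
  assumes "set B \<subseteq> \<rat>"
  shows "\<not> spec_holds sqrt_2_spec A B"
proof -
  have "lookup B 0 \<in> \<rat>"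
    using assms by (auto simp: lookup_def)
  then show ?thesis
    by (simp add: spec_holds_sqrt_2_spec Rats_square_neq_2)
qed

lemma not_realizes_UNIV_sqrt_2_spec: "\<not> realizes UNIV P sqrt_2_spec"
proof (rule not_realizes_UNIV_if_only_irrational_solutions)
  show "spec_holds sqrt_2_spec [] [sqrt 2]"
    by (simp add: spec_holds_sqrt_2_spec lookup_def)
qed (simp_all add: sqrt_2_spec_no_Rats_solution, simp_all add: sqrt_2_spec_def Let_def)

lemma realizes_Rats_ReturnBot_sqrt_2_spec: "realizes \<rat> ReturnBot sqrt_2_spec"
  by (rule realizes_ReturnBot) (simp add: sqrt_2_spec_no_Rats_solution)

theorem mainTheorem1:
  shows "(\<forall>L Alg. fragment L \<longrightarrow> solves UNIV Alg L \<longrightarrow> solves \<rat> Alg L)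
       \<and> (\<exists>L. fragment L \<and> finite L \<and> \<not> (\<exists>Alg. solves UNIV Alg L)
              \<and> (\<exists>Alg. solves \<rat> Alg L))"
proof (intro conjI allI impI)
  fix L Alg assume "solves UNIV Alg L"
  then show "solves \<rat> Alg L"
    by (simp add: solves_def realizes_UNIV_imp_realizes_Rats)
next
  have "fragment {sqrt_2_spec}"
    by (simp add: fragment_def spec_wf_sqrt_2_spec)
  moreover have "\<not> (\<exists>Alg. solves UNIV Alg {sqrt_2_spec})"
    by (simp add: solves_def not_realizes_UNIV_sqrt_2_spec)
  moreover have "solves \<rat> (\<lambda>_. ReturnBot) {sqrt_2_spec}"
    by (simp add: solves_def realizes_Rats_ReturnBot_sqrt_2_spec)
  ultimately show "\<exists>L. fragment L \<and> finite L \<and> \<not> (\<exists>Alg. solves UNIV Alg L)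
                     \<and> (\<exists>Alg. solves \<rat> Alg L)"
    by blast
qed

end
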